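(* Let $\Gamma$ be a subgroup of $\mathbb{R}$ commensurable with $\mathbb{Z}$ (i.e. an arithmetic lattice for $G(\mathbb{Z})=\mathbb{Z}$, $G(\mathbb{R})=\mathbb{R}$). Then $\log(\mathbf{C}_n(\Gamma,\mathbb{R})) \simeq \log(n)$. More precisely, $$ n (\log n)^{\log 2} \preceq \mathbf{C}_n(\Gamma,\mathbb{R}) \preceq n \log n. $$
   Context: For subgroups $\Delta_1,\Delta_2$ of a group, $c(\Delta_1,\Delta_2) = [\Delta_1:\Delta_1\cap\Delta_2][\Delta_2:\Delta_1\cap\Delta_2]$. $\mathbf{C}_n(\Gamma,\mathbb{R})$ is the number of subgroups $\Delta \leq \mathbb{R}$ with $c(\Gamma,\Delta) \leq n$. For functions $f,g$ on $\mathbb{N}$, $f \preceq g$ means there exists $C>0$ with $f(n) \leq C g(Cn)$ for all $n$; $f \simeq g$ means $f\preceq g$ and $g \preceq f$. $\log$ denotes the natural logarithm. *)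

theory Defs
  imports Complex_Main
begin

definition add_subgroup :: "real set \<Rightarrow> bool" where
  "add_subgroup S \<longleftrightarrow> 0 \<in> S \<and> (\<forall>x\<in>S. \<forall>y\<in>S. x + y \<in> S) \<and> (\<forall>x\<in>S. - x \<in> S)"

definition rel_cosets :: "real set \<Rightarrow> real set \<Rightarrow> real set set" where
  "rel_cosets A B = {{x + y | y. y \<in> A \<inter> B} | x. x \<in> A}"

definition rel_index :: "real set \<Rightarrow> real set \<Rightarrow> nat" where
  "rel_index A B = card (rel_cosets A B)"

definition commensurable :: "real set \<Rightarrow> real set \<Rightarrow> bool" where
  "commensurable A B \<longleftrightarrow> finite (rel_cosets A B) \<and> finite (rel_cosets B A)"

text \<open>c(A,B) = [A : A\<inter>B][B : A\<inter>B] (only meaningful when commensurable;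
  otherwise c is infinite).\<close>
definition cval :: "real set \<Rightarrow> real set \<Rightarrow> nat" where
  "cval A B = rel_index A B * rel_index B A"

text \<open>C_n(\<Gamma>, \<real>): number of subgroups \<Delta> of \<real> with c(\<Gamma>,\<Delta>) \<le> n
  (c is finite exactly when \<Gamma>, \<Delta> are commensurable).\<close>
definition Cn :: "real set \<Rightarrow> nat \<Rightarrow> nat" where
  "Cn \<Gamma> n = card {\<Delta>. add_subgroup \<Delta> \<and> commensurable \<Gamma> \<Delta> \<and> cval \<Gamma> \<Delta> \<le> n}"

definition preceq :: "(nat \<Rightarrow> real) \<Rightarrow> (nat \<Rightarrow> real) \<Rightarrow> bool" where
  "preceq f g \<longleftrightarrow> (\<exists>C::nat. C > 0 \<and> (\<forall>n. f n \<le> real C * g (C * n)))"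

definition simeq :: "(nat \<Rightarrow> real) \<Rightarrow> (nat \<Rightarrow> real) \<Rightarrow> bool" where
  "simeq f g \<longleftrightarrow> preceq f g \<and> preceq g f"

end

theory Submission
  imports Defs "HOL-Analysis.Harmonic_Numbers"
begin

text \<open>A subgroup of \<real> commensurable with \<Gamma> = r\<int> has bounded denominators over r\<int>, so it is
  cyclic, of the form (ra/b)\<int> with a, b coprime, and c(\<Gamma>, (ra/b)\<int>) = ab. Hence C_n(\<Gamma>, \<real>)
  counts the coprime pairs (a, b) with ab \<le> n. All pairs with ab \<le> n number
  \<Sum>_{a \<le> n} \<lfloor>n/a\<rfloor> = n log n + O(n); dividing out the gcd g bounds this by \<Sum>_g C_{n/g^2}, and as
  \<Sum>_{g \<ge> 2} 1/g^2 < 3/4, the coprime pairs alone number at least n log n / 4 - O(n), which is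
  more than the claimed lower bound n (log n)^(log 2).\<close>

section \<open>Subgroups of \<real> commensurable with r\<int>\<close>

definition int_multiples :: "real \<Rightarrow> real set" where
  "int_multiples u = range (\<lambda>i::int. u * of_int i)"

lemma int_multiples_iff: "z \<in> int_multiples u \<longleftrightarrow> (\<exists>i::int. z = u * of_int i)"
  by (auto simp: int_multiples_def)

lemma self_in_int_multiples: "u \<in> int_multiples u"
  unfolding int_multiples_iff by (intro exI[of _ 1]) simp

lemma Ints_eq_int_multiples_1: "(\<int> :: real set) = int_multiples 1"
  by (simp add: int_multiples_def Ints_def)

lemma add_subgroup_0: "add_subgroup H \<Longrightarrow> 0 \<in> H"
  by (simp add: add_subgroup_def)

lemma add_subgroup_add: "add_subgroup H \<Longrightarrow> x \<in> H \<Longrightarrow> y \<in> H \<Longrightarrow> x + y \<in> H"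
  by (simp add: add_subgroup_def)

lemma add_subgroup_uminus: "add_subgroup H \<Longrightarrow> x \<in> H \<Longrightarrow> - x \<in> H"
  by (simp add: add_subgroup_def)

lemma add_subgroup_diff: "add_subgroup H \<Longrightarrow> x \<in> H \<Longrightarrow> y \<in> H \<Longrightarrow> x - y \<in> H"
  using add_subgroup_add[of H x "- y"] add_subgroup_uminus[of H y] by simp

lemma add_subgroup_Int: "add_subgroup A \<Longrightarrow> add_subgroup B \<Longrightarrow> add_subgroup (A \<inter> B)"
  by (simp add: add_subgroup_def)

lemma add_subgroup_of_nat_mult:
  assumes "add_subgroup H" "x \<in> H"
  shows "of_nat n * x \<in> H"
proof (induction n)
  case 0
  show ?case using add_subgroup_0[OF assms(1)] by simp
next
  case (Suc n)
  then show ?case using add_subgroup_add[OF assms(1) Suc assms(2)] by (simp add: algebra_simps)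
qed

lemma add_subgroup_of_int_mult:
  assumes "add_subgroup H" "x \<in> H"
  shows "of_int i * x \<in> H"
proof (cases "i \<ge> 0")
  case True
  then show ?thesis using add_subgroup_of_nat_mult[OF assms, of "nat i"] by simp
next
  case False
  then show ?thesis
    using add_subgroup_uminus[OF assms(1) add_subgroup_of_nat_mult[OF assms, of "nat (- i)"]]
    by simp
qed

lemma add_subgroup_int_multiples: "add_subgroup (int_multiples u)"
  unfolding add_subgroup_def
proof (intro conjI ballI)
  show "0 \<in> int_multiples u" unfolding int_multiples_iff by (rule exI[of _ 0]) simp
next
  fix x y assume "x \<in> int_multiples u" "y \<in> int_multiples u"
  then obtain i j where "x = u * of_int i" "y = u * of_int j" by (auto simp: int_multiples_iff)
  then show "x + y \<in> int_multiples u"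
    unfolding int_multiples_iff by (intro exI[of _ "i + j"]) (simp add: algebra_simps)
next
  fix x assume "x \<in> int_multiples u"
  then obtain i where "x = u * of_int i" by (auto simp: int_multiples_iff)
  then show "- x \<in> int_multiples u" unfolding int_multiples_iff by (intro exI[of _ "- i"]) simp
qed

lemma mult_of_int_in_int_multiples_iff:
  assumes "u \<noteq> 0"
  shows "u * of_int i \<in> int_multiples (u * of_nat k) \<longleftrightarrow> int k dvd i"
proof -
  have "u * of_int i = u * of_nat k * of_int l \<longleftrightarrow> (of_int i :: real) = of_int (int k * l)" for l
    using assms by (simp add: mult.assoc)
  then show ?thesis unfolding int_multiples_iff dvd_def of_int_eq_iff by blast
qed

lemma add_coset_eq_iff:
  assumes "add_subgroup H"
  shows "{x + y |y. y \<in> H} = {x' + y |y. y \<in> H} \<longleftrightarrow> x - x' \<in> H"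
proof
  assume "{x + y |y. y \<in> H} = {x' + y |y. y \<in> H}"
  moreover have "x + 0 \<in> {x + y |y. y \<in> H}" using add_subgroup_0[OF assms] by blast
  ultimately obtain y where "y \<in> H" "x = x' + y" by auto
  then show "x - x' \<in> H" by simp
next
  assume h: "x - x' \<in> H"
  have "x + y = x' + ((x - x') + y)" "x' + y = x + (y - (x - x'))" for y by simp_all
  then show "{x + y |y. y \<in> H} = {x' + y |y. y \<in> H}"
    using add_subgroup_add[OF assms h] add_subgroup_diff[OF assms _ h] by blast
qed

lemma card_rel_cosets_int_multiples:
  assumes u: "u \<noteq> 0" and k: "k > 0" and C: "int_multiples u \<inter> C = int_multiples (u * of_nat k)"
  shows "finite (rel_cosets (int_multiples u) C) \<and> card (rel_cosets (int_multiples u) C) = k"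
proof -
  define H where "H = int_multiples (u * of_nat k)"
  define cs where "cs i = {u * of_int i + y |y. y \<in> H}" for i :: int
  have same_coset: "cs i = cs j \<longleftrightarrow> int k dvd i - j" for i j
  proof -
    have "u * of_int i - u * of_int j = u * of_int (i - j)" by (simp add: algebra_simps)
    then show ?thesis
      using add_coset_eq_iff[OF add_subgroup_int_multiples] mult_of_int_in_int_multiples_iff[OF u]
      unfolding cs_def H_def by (simp only:)
  qed
  have "rel_cosets (int_multiples u) C = range cs"
    unfolding rel_cosets_def C cs_def H_def int_multiples_iff by blast
  also have "\<dots> = cs ` {0..<int k}"
  proof -
    have "cs i = cs (i mod int k)" for i using same_coset by simp
    moreover have "i mod int k \<in> {0..<int k}" for i using k by simp
    ultimately show ?thesis by blast
  qed
  finally have R: "rel_cosets (int_multiples u) C = cs ` {0..<int k}" .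
  have "inj_on cs {0..<int k}"
    by (rule inj_onI) (simp add: same_coset flip: mod_eq_dvd_iff)
  then show ?thesis unfolding R by (simp add: card_image)
qed

lemma finite_rel_cosets_multiple_mem:
  assumes A: "add_subgroup A" and B: "add_subgroup B" and fin: "finite (rel_cosets A B)"
    and x: "x \<in> A"
  shows "\<exists>d::nat. 1 \<le> d \<and> d \<le> card (rel_cosets A B) \<and> of_nat d * x \<in> B"
proof -
  define m where "m = card (rel_cosets A B)"
  define cs where "cs j = {of_nat j * x + y |y. y \<in> A \<inter> B}" for j :: nat
  have "cs ` {0..m} \<subseteq> rel_cosets A B"
    unfolding rel_cosets_def cs_def using add_subgroup_of_nat_mult[OF A x] by blast
  then have "card (cs ` {0..m}) \<le> m"
    using card_mono[OF fin] unfolding m_def by blast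
  then have "\<not> inj_on cs {0..m}"
    by (auto dest: card_image)
  then obtain i j where ij: "i < j" "j \<le> m" "cs i = cs j"
    unfolding inj_on_def by (metis atLeastAtMost_iff linorder_neqE_nat)
  have "of_nat j * x - of_nat i * x \<in> A \<inter> B"
    using ij(3) add_coset_eq_iff[OF add_subgroup_Int[OF A B]] unfolding cs_def by blast
  moreover have "of_nat j * x - of_nat i * x = of_nat (j - i) * x"
    using ij(1) by (simp add: of_nat_diff algebra_simps)
  ultimately show ?thesis using ij unfolding m_def by (intro exI[of _ "j - i"]) auto
qed

lemma int_multiples_Int_fraction:
  assumes r: "r \<noteq> 0" and b: "b > 0" and ab: "coprime a b"
  shows "int_multiples r \<inter> int_multiples (r * of_nat a / of_nat b) = int_multiples (r * of_nat a)"
proof safe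
  fix z assume z: "z \<in> int_multiples r" "z \<in> int_multiples (r * of_nat a / of_nat b)"
  obtain i where i: "z = r * of_int i" using z(1) unfolding int_multiples_iff by blast
  obtain j where j: "z = r * of_nat a / of_nat b * of_int j"
    using z(2) unfolding int_multiples_iff by blast
  have "r * of_int (int b * i) = r * of_int (int a * j)"
    using i j b by (simp add: field_simps) (metis mult.commute)
  then have "int b * i = int a * j" using r by (metis mult_cancel_left of_int_eq_iff)
  then have "int a dvd int b * i" by simp
  moreover have "coprime (int a) (int b)" using ab by simp
  ultimately have "int a dvd i" using coprime_dvd_mult_right_iff by blast
  then obtain l where "i = int a * l" by blast
  then show "z \<in> int_multiples (r * of_nat a)" unfolding int_multiples_iff i by auto
next
  fix z assume "z \<in> int_multiples (r * of_nat a)"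
  then obtain l where l: "z = r * of_nat a * of_int l" by (auto simp: int_multiples_iff)
  show "z \<in> int_multiples r" unfolding int_multiples_iff l by (intro exI[of _ "int a * l"]) simp
  show "z \<in> int_multiples (r * of_nat a / of_nat b)" unfolding int_multiples_iff l using b
    by (intro exI[of _ "int b * l"]) (simp add: field_simps)
qed

lemma int_multiples_eq_iff:
  assumes "u > 0" "v > 0"
  shows "int_multiples u = int_multiples v \<longleftrightarrow> u = v"
proof
  assume eq: "int_multiples u = int_multiples v"
  obtain i where i: "u = v * of_int i"
    using self_in_int_multiples[of u] unfolding eq int_multiples_iff by blast
  obtain j where j: "v = u * of_int j"
    using self_in_int_multiples[of v] unfolding eq[symmetric] int_multiples_iff by blast
  have "of_int (i * j) = (1 :: real)" using i j assms by (simp add: algebra_simps)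
  then have "i * j = 1" by linarith
  moreover have "i > 0" using i assms by (simp add: zero_less_mult_iff)
  ultimately have "i = 1" by (simp add: zmult_eq_1_iff)
  then show "u = v" using i by simp
qed simp

lemma add_subgroup_subset_int_multiples_cyclic:
  assumes B: "add_subgroup B" and sub: "B \<subseteq> int_multiples u" and x: "x \<in> B" "x \<noteq> 0"
  obtains t :: nat where "t > 0" "B = int_multiples (u * of_nat t)"
proof -
  define I where "I = {i::int. u * of_int i \<in> B}"
  obtain i0 where "x = u * of_int i0"
    using subsetD[OF sub x(1)] unfolding int_multiples_iff by blast
  then have "i0 \<in> I" "- i0 \<in> I" "i0 \<noteq> 0"
    using x add_subgroup_uminus[OF B] unfolding I_def by auto
  then have ex: "\<exists>t::nat. t > 0 \<and> int t \<in> I"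
    by (intro exI[of _ "nat \<bar>i0\<bar>"]) (simp add: abs_if)
  define t where "t = (LEAST t::nat. t > 0 \<and> int t \<in> I)"
  have t: "t > 0" "u * of_nat t \<in> B"
    using LeastI_ex[OF ex] unfolding t_def I_def by auto
  have t_min: "t \<le> s" if "s > 0" "int s \<in> I" for s
    unfolding t_def using that by (intro Least_le) simp
  have "B \<subseteq> int_multiples (u * of_nat t)"
  proof
    fix z assume z: "z \<in> B"
    obtain i where i: "z = u * of_int i"
      using subsetD[OF sub z] unfolding int_multiples_iff by blast
    have "real_of_int i = real_of_int (int t * (i div int t) + i mod int t)" by simp
    then have i_split: "real_of_int i = real t * of_int (i div int t) + of_int (i mod int t)"
      by (simp only: of_int_add of_int_mult of_int_of_nat_eq)
    have "u * of_int (i mod int t) = z - of_int (i div int t) * (u * of_nat t)"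
      unfolding i i_split by (simp add: algebra_simps)
    also have "\<dots> \<in> B"
      using add_subgroup_diff[OF B z add_subgroup_of_int_mult[OF B t(2)]] .
    finally have "i mod int t \<in> I" unfolding I_def by simp
    moreover have "0 \<le> i mod int t" "i mod int t < int t" using t(1) by simp_all
    ultimately have "i mod int t = 0"
      using t_min[of "nat (i mod int t)"] by (cases "i mod int t > 0") auto
    then have "z = u * of_nat t * of_int (i div int t)"
      unfolding i i_split by simp
    then show "z \<in> int_multiples (u * of_nat t)" unfolding int_multiples_iff by blast
  qed
  moreover have "int_multiples (u * of_nat t) \<subseteq> B"
    using add_subgroup_of_int_mult[OF B t(2)] by (auto simp: int_multiples_iff mult.commute)
  ultimately show ?thesis using t(1) that by blast
qed

lemma finite_rel_cosets_subset_int_multiples: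
  assumes B: "add_subgroup B" and fin: "finite (rel_cosets B (int_multiples r))"
  obtains M :: nat where "M > 0" "B \<subseteq> int_multiples (r / of_nat M)"
proof
  define m where "m = card (rel_cosets B (int_multiples r))"
  show "fact m > (0::nat)" by simp
  show "B \<subseteq> int_multiples (r / of_nat (fact m))"
  proof
    fix x assume x: "x \<in> B"
    obtain d :: nat where d: "1 \<le> d" "d \<le> m" "of_nat d * x \<in> int_multiples r"
      using finite_rel_cosets_multiple_mem[OF B add_subgroup_int_multiples fin x]
      unfolding m_def by blast
    obtain i where i: "of_nat d * x = r * of_int i" using d(3) unfolding int_multiples_iff by blast
    \<comment> \<open>\<open>m!\<close> is a common multiple of all the possible \<open>d \<le> m\<close>\<close>
    obtain e where e: "fact m = d * e" using dvd_fact[OF d(1,2)] by blast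
    then have "e > 0" by (metis fact_nonzero mult_0_right neq0_conv)
    then have "x = r / of_nat (fact m) * of_int (i * int e)"
      using i d(1) unfolding e by (simp add: field_simps)
    then show "x \<in> int_multiples (r / of_nat (fact m))" unfolding int_multiples_iff by blast
  qed
qed

lemma commensurable_int_multiplesE:
  assumes r: "r > 0" and B: "add_subgroup B" and comm: "commensurable (int_multiples r) B"
  obtains a b :: nat
  where "a > 0" "b > 0" "coprime a b" "B = int_multiples (r * of_nat a / of_nat b)"
proof -
  obtain M :: nat where M: "M > 0" "B \<subseteq> int_multiples (r / of_nat M)"
    using finite_rel_cosets_subset_int_multiples[OF B] comm unfolding commensurable_def by blast
  obtain d :: nat where d: "1 \<le> d" "of_nat d * r \<in> B"
    using finite_rel_cosets_multiple_mem[OF add_subgroup_int_multiples B _ self_in_int_multiples]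
      comm unfolding commensurable_def by blast
  obtain t :: nat where t: "t > 0" "B = int_multiples (r / of_nat M * of_nat t)"
    using add_subgroup_subset_int_multiples_cyclic[OF B M(2) d(2)] d(1) r by auto
  obtain a b where ab: "t = a * gcd t M" "M = b * gcd t M" "coprime a b"
    using gcd_coprime_exists[of t M] t(1) by auto
  then have "a > 0" "b > 0" using t(1) M(1) by (auto intro: gr0I)
  moreover have "r / of_nat M * of_nat t = r * of_nat a / of_nat b"
    using t(1) by (subst ab(1), subst ab(2)) simp
  ultimately show ?thesis using that ab(3) t(2) by metis
qed

lemma commensurable_int_multiples_fraction:
  assumes r: "r > 0" and a: "a > 0" and b: "b > 0" and ab: "coprime a b"
  shows "commensurable (int_multiples r) (int_multiples (r * of_nat a / of_nat b))"
    and "cval (int_multiples r) (int_multiples (r * of_nat a / of_nat b)) = a * b"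
proof -
  define v where "v = r * of_nat a / of_nat b"
  have "v \<noteq> 0" "r * of_nat a = v * of_nat b" unfolding v_def using r a b by simp_all
  moreover have "int_multiples r \<inter> int_multiples v = int_multiples (r * of_nat a)"
    unfolding v_def using int_multiples_Int_fraction[OF _ b ab] r by simp
  ultimately have "finite (rel_cosets (int_multiples r) (int_multiples v))"
    "card (rel_cosets (int_multiples r) (int_multiples v)) = a"
    "finite (rel_cosets (int_multiples v) (int_multiples r))"
    "card (rel_cosets (int_multiples v) (int_multiples r)) = b"
    using card_rel_cosets_int_multiples[of r a "int_multiples v"]
      card_rel_cosets_int_multiples[of v b "int_multiples r"] r a b by (auto simp: Int_commute)
  then show "commensurable (int_multiples r) (int_multiples v)"
    and "cval (int_multiples r) (int_multiples v) = a * b"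
    unfolding commensurable_def cval_def rel_index_def by simp_all
qed

section \<open>Coprime pairs with product at most n\<close>

definition prod_le_pairs :: "nat \<Rightarrow> (nat \<times> nat) set" where
  "prod_le_pairs n = {(a, b). 0 < a \<and> 0 < b \<and> a * b \<le> n}"

definition coprime_prod_le_pairs :: "nat \<Rightarrow> (nat \<times> nat) set" where
  "coprime_prod_le_pairs n = {(a, b) \<in> prod_le_pairs n. coprime a b}"

lemma Cn_int_multiples:
  assumes r: "r > 0"
  shows "Cn (int_multiples r) n = card (coprime_prod_le_pairs n)"
proof -
  define F where "F = (\<lambda>(a::nat, b::nat). int_multiples (r * of_nat a / of_nat b))"
  have "{\<Delta>. add_subgroup \<Delta> \<and> commensurable (int_multiples r) \<Delta> \<and> cval (int_multiples r) \<Delta> \<le> n}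
      = F ` coprime_prod_le_pairs n"
  proof safe
    fix \<Delta> assume \<Delta>: "add_subgroup \<Delta>" "commensurable (int_multiples r) \<Delta>"
      "cval (int_multiples r) \<Delta> \<le> n"
    then obtain a b where ab: "a > 0" "b > 0" "coprime a b" "\<Delta> = F (a, b)"
      using commensurable_int_multiplesE[OF r] unfolding F_def by auto
    then have "(a, b) \<in> coprime_prod_le_pairs n"
      using \<Delta>(3) commensurable_int_multiples_fraction[OF r]
      unfolding coprime_prod_le_pairs_def prod_le_pairs_def F_def by simp
    then show "\<Delta> \<in> F ` coprime_prod_le_pairs n" using ab(4) by blast
  qed (auto simp: coprime_prod_le_pairs_def prod_le_pairs_def F_def add_subgroup_int_multiples
      commensurable_int_multiples_fraction[OF r])
  moreover have "inj_on F (coprime_prod_le_pairs n)"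
  proof (rule inj_onI, clarify)
    fix a b a' b' assume "(a, b) \<in> coprime_prod_le_pairs n" "(a', b') \<in> coprime_prod_le_pairs n"
      and eq: "F (a, b) = F (a', b')"
    then have ab: "a > 0" "b > 0" "a' > 0" "b' > 0" "coprime a b" "coprime a' b'"
      unfolding coprime_prod_le_pairs_def prod_le_pairs_def by auto
    have "r * of_nat a / of_nat b = r * of_nat a' / of_nat b'"
      using eq r ab by (simp add: F_def int_multiples_eq_iff)
    then have "a * b' = a' * b"
      using r ab by (simp add: field_simps flip: of_nat_mult)
    then show "a = a' \<and> b = b'"
      using ab coprime_crossproduct_nat[of a b a' b'] by (auto simp: coprime_commute)
  qed
  ultimately show ?thesis unfolding Cn_def by (simp add: card_image)
qed

lemma prod_le_pairs_eq_Sigma: "prod_le_pairs n = (SIGMA a:{1..n}. {1..n div a})"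
proof safe
  fix a b assume "(a, b) \<in> prod_le_pairs n"
  then have ab: "0 < a" "0 < b" "a * b \<le> n" unfolding prod_le_pairs_def by auto
  have "a \<le> a * b" using ab by simp
  then have "a \<le> n" using ab(3) by linarith
  then show "a \<in> {1..n}" using ab by simp
  show "b \<in> {1..n div a}" using ab by (simp add: less_eq_div_iff_mult_less_eq mult.commute)
qed (auto simp: prod_le_pairs_def less_eq_div_iff_mult_less_eq mult.commute)

lemma finite_prod_le_pairs: "finite (prod_le_pairs n)"
  unfolding prod_le_pairs_eq_Sigma by simp

lemma finite_coprime_prod_le_pairs: "finite (coprime_prod_le_pairs n)"
  by (rule finite_subset[OF _ finite_prod_le_pairs]) (auto simp: coprime_prod_le_pairs_def)

lemma card_prod_le_pairs: "card (prod_le_pairs n) = (\<Sum>a=1..n. n div a)"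
  unfolding prod_le_pairs_eq_Sigma by simp

lemma card_prod_le_pairs_upper: "real (card (prod_le_pairs n)) \<le> real n * (ln (real n) + 1)"
proof (cases "n = 0")
  case False
  have "real (card (prod_le_pairs n)) = (\<Sum>a=1..n. real (n div a))"
    unfolding card_prod_le_pairs by simp
  also have "\<dots> \<le> (\<Sum>a=1..n. real n * inverse (real a))"
    by (intro sum_mono) (simp add: of_nat_div_le_of_nat field_simps)
  also have "\<dots> = real n * harm n" by (simp add: harm_def sum_distrib_left)
  also have "\<dots> \<le> real n * (ln (real n) + 1)"
    using euler_mascheroni_sequence_decreasing[of 1 n] False
    by (intro mult_left_mono) (simp_all add: harm_def)
  finally show ?thesis .
qed (simp add: card_prod_le_pairs)

lemma card_prod_le_pairs_lower: "real n * ln (real n) - real n \<le> real (card (prod_le_pairs n))"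
proof -
  have "real n * ln (real n) - real n \<le> real n * harm n - real n"
    by (cases "n = 0") (auto intro!: mult_left_mono order.trans[OF _ ln_le_harm])
  also have "\<dots> = (\<Sum>a=1..n. real n / real a - 1)"
    by (simp add: harm_def sum_distrib_left sum_subtractf divide_inverse)
  also have "\<dots> \<le> (\<Sum>a=1..n. real (n div a))"
  proof (intro sum_mono)
    fix a assume "a \<in> {1..n}"
    then have "real (n mod a) / real a < 1" by simp
    then show "real n / real a - 1 \<le> real (n div a)"
      using of_nat_of_nat_div_aux[of n a, where 'a = real] by linarith
  qed
  also have "\<dots> = real (card (prod_le_pairs n))" unfolding card_prod_le_pairs by simp
  finally show ?thesis .
qed

lemma card_coprime_prod_le_pairs_upper:
  "real (card (coprime_prod_le_pairs n)) \<le> real n * (ln (real n) + 1)"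
proof -
  have "card (coprime_prod_le_pairs n) \<le> card (prod_le_pairs n)"
    using finite_prod_le_pairs by (intro card_mono) (auto simp: coprime_prod_le_pairs_def)
  then show ?thesis using card_prod_le_pairs_upper[of n] by linarith
qed

lemma card_coprime_prod_le_pairs_ge: "n \<le> card (coprime_prod_le_pairs n)"
proof -
  have "Pair 1 ` {1..n} \<subseteq> coprime_prod_le_pairs n"
    by (auto simp: coprime_prod_le_pairs_def prod_le_pairs_def)
  from card_mono[OF finite_coprime_prod_le_pairs this] show ?thesis
    by (simp add: card_image inj_on_def)
qed

lemma card_coprime_prod_le_pairs_le_square: "card (coprime_prod_le_pairs n) \<le> n\<^sup>2"
proof -
  have "coprime_prod_le_pairs n \<subseteq> {1..n} \<times> {1..n}"
    unfolding coprime_prod_le_pairs_def prod_le_pairs_eq_Sigma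
    using div_le_dividend order_trans by fastforce
  from card_mono[OF _ this] show ?thesis by (simp add: power2_eq_square)
qed

lemma card_prod_le_pairs_le_sum_coprime:
  "card (prod_le_pairs n) \<le> (\<Sum>g=1..n. card (coprime_prod_le_pairs (n div g\<^sup>2)))"
proof -
  define S where "S = (SIGMA g:{1..n}. coprime_prod_le_pairs (n div g\<^sup>2))"
  have fin: "finite S" unfolding S_def using finite_coprime_prod_le_pairs by simp
  have "prod_le_pairs n \<subseteq> (\<lambda>(g, a, b). (g * a, g * b)) ` S"
  proof clarify
    fix x y assume "(x, y) \<in> prod_le_pairs n"
    then have xy: "0 < x" "0 < y" "x * y \<le> n" unfolding prod_le_pairs_def by auto
    obtain a b where ab: "x = a * gcd x y" "y = b * gcd x y" "coprime a b"
      using gcd_coprime_exists[of x y] xy by auto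
    define g where "g = gcd x y"
    have "g > 0" "a > 0" "b > 0" using xy ab unfolding g_def by (auto intro: gr0I)
    have "a * b * g\<^sup>2 \<le> n"
      using xy(3) ab unfolding g_def by (metis mult.commute mult.left_commute power2_eq_square)
    then have "a * b \<le> n div g\<^sup>2" using \<open>g > 0\<close> by (simp add: less_eq_div_iff_mult_less_eq)
    moreover have "g \<le> n"
    proof -
      have "g \<le> g\<^sup>2" using \<open>g > 0\<close> by (simp add: power2_eq_square)
      also have "\<dots> \<le> a * b * g\<^sup>2" using \<open>a > 0\<close> \<open>b > 0\<close> by simp
      finally show ?thesis using \<open>a * b * g\<^sup>2 \<le> n\<close> by linarith
    qed
    ultimately have "(g, a, b) \<in> S"
      using \<open>g > 0\<close> \<open>a > 0\<close> \<open>b > 0\<close> ab(3)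
      unfolding S_def coprime_prod_le_pairs_def prod_le_pairs_def by auto
    moreover have "(x, y) = (g * a, g * b)" using ab unfolding g_def by (simp add: mult.commute)
    ultimately show "(x, y) \<in> (\<lambda>(g, a, b). (g * a, g * b)) ` S" by force
  qed
  then have "card (prod_le_pairs n) \<le> card S"
    using fin by (meson card_image_le card_mono finite_imageI le_trans)
  also have "card S = (\<Sum>g=1..n. card (coprime_prod_le_pairs (n div g\<^sup>2)))"
    unfolding S_def using finite_coprime_prod_le_pairs by simp
  finally show ?thesis .
qed

lemma sum_inverse_squares_from_2_le: "(\<Sum>g=2..n. 1 / (real g)\<^sup>2) \<le> 3 / 4"
proof -
  \<comment> \<open>\<open>1/4\<close> from \<open>g = 2\<close>, then \<open>1/g\<^sup>2 \<le> 1/(g - 1) - 1/g\<close> telescopes\<close>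
  have bound: "(\<Sum>g=2..n. 1 / (real g)\<^sup>2) \<le> 3 / 4 - 1 / real n" if "n \<ge> 2" for n
    using that
  proof (induction n rule: nat_induct_at_least)
    case (Suc n)
    have "1 / (real (Suc n))\<^sup>2 \<le> 1 / (real n * real (Suc n))"
      using Suc.hyps by (intro frac_le) (simp_all add: power2_eq_square)
    also have "\<dots> = 1 / real n - 1 / real (Suc n)"
      using Suc.hyps by (simp add: field_simps)
    finally show ?case using Suc.IH Suc.hyps by simp
  qed simp
  show ?thesis
  proof (cases "n \<ge> 2")
    case True
    show ?thesis using bound[OF True] by (rule order.trans) simp
  qed simp
qed

lemma card_coprime_prod_le_pairs_lower:
  "real n * ln (real n) / 4 - 7 * real n / 4 \<le> real (card (coprime_prod_le_pairs n))"
proof (cases "n = 0")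
  case False
  let ?Q = "\<lambda>m. real (card (coprime_prod_le_pairs m))"
  have L: "0 \<le> ln (real n) + 1" using False by simp
  have summand: "?Q (n div g\<^sup>2) \<le> real n * (ln (real n) + 1) * (1 / (real g)\<^sup>2)" for g
  proof -
    define m where "m = n div g\<^sup>2"
    have "m \<le> n" unfolding m_def by (rule div_le_dividend)
    have "?Q m \<le> real m * (ln (real m) + 1)" by (rule card_coprime_prod_le_pairs_upper)
    also have "\<dots> \<le> real m * (ln (real n) + 1)"
      using \<open>m \<le> n\<close> by (cases "m = 0") (auto intro!: mult_left_mono)
    also have "\<dots> \<le> real n / (real g)\<^sup>2 * (ln (real n) + 1)"
      using of_nat_div_le_of_nat[of n "g\<^sup>2", where 'a = real] L unfolding m_def
      by (intro mult_right_mono) auto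
    finally show ?thesis unfolding m_def by simp
  qed
  have "real n * ln (real n) - real n \<le> real (card (prod_le_pairs n))"
    by (rule card_prod_le_pairs_lower)
  also have "\<dots> \<le> (\<Sum>g=1..n. ?Q (n div g\<^sup>2))"
    using card_prod_le_pairs_le_sum_coprime[of n] by (simp flip: of_nat_sum)
  also have "\<dots> = ?Q n + (\<Sum>g=2..n. ?Q (n div g\<^sup>2))"
    using False by (simp add: sum.atLeast_Suc_atMost numeral_2_eq_2)
  also have "\<dots> \<le> ?Q n + (\<Sum>g=2..n. real n * (ln (real n) + 1) * (1 / (real g)\<^sup>2))"
    using summand by (intro add_left_mono sum_mono)
  also have "\<dots> = ?Q n + real n * (ln (real n) + 1) * (\<Sum>g=2..n. 1 / (real g)\<^sup>2)"
    by (simp add: sum_distrib_left)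
  also have "\<dots> \<le> ?Q n + real n * (ln (real n) + 1) * (3 / 4)"
    using sum_inverse_squares_from_2_le L by (intro add_left_mono mult_left_mono) auto
  finally show ?thesis by (simp add: algebra_simps)
qed simp

section \<open>Growth rates\<close>

lemma one_le_ln_3: "1 \<le> ln (3 :: real)"
  using exp_le by (simp add: ln_ge_iff)

lemma ln_of_nat_nonneg: "0 \<le> ln (real n)"
  by (cases "n = 0") simp_all

lemma powr_le_add_one:
  fixes x p :: real
  assumes "0 \<le> x" "0 \<le> p" "p \<le> 1"
  shows "x powr p \<le> x + 1"
proof (cases "x \<le> 1")
  case True
  then have "x powr p \<le> 1" using assms by (intro powr_le1) auto
  then show ?thesis using assms(1) by linarith
next
  case False
  then have "x powr p \<le> x powr 1" using assms by (intro powr_mono) auto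
  then show ?thesis using False by simp
qed

lemma preceq_mono_left:
  assumes "\<And>n. f n \<le> g n" and "preceq g h"
  shows "preceq f h"
  using assms order_trans unfolding preceq_def by meson

lemma preceq_ln_ln_if_ge:
  assumes "\<And>n. n \<le> F n"
  shows "preceq (\<lambda>n. ln (real n)) (\<lambda>n. ln (real (F n)))"
  unfolding preceq_def
proof (intro exI[of _ 1] conjI allI)
  show "ln (real n) \<le> real 1 * ln (real (F (1 * n)))" for n
    using assms[of n] ln_of_nat_nonneg[of "F n"] by (cases "n = 0") simp_all
qed simp

lemma preceq_ln_ln_if_le_square:
  assumes "\<And>n. F n \<le> n\<^sup>2"
  shows "preceq (\<lambda>n. ln (real (F n))) (\<lambda>n. ln (real n))"
  unfolding preceq_def
proof (intro exI[of _ 2] conjI allI)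
  fix n
  show "ln (real (F n)) \<le> real 2 * ln (real (2 * n))"
  proof (cases "F n = 0")
    case False
    then have "n > 0" using assms[of n] by (auto intro: gr0I)
    have "ln (real (F n)) \<le> ln (real n ^ 2)"
      using assms[of n] False \<open>n > 0\<close> by (subst ln_le_cancel_iff) (simp_all flip: of_nat_power)
    also have "\<dots> = 2 * ln (real n)" using \<open>n > 0\<close> by (simp add: ln_realpow)
    also have "\<dots> \<le> real 2 * ln (real (2 * n))" using \<open>n > 0\<close> by simp
    finally show ?thesis .
  qed (use ln_of_nat_nonneg[of "2 * n"] in simp)
qed simp

lemma preceq_n_ln_if_le:
  assumes "\<And>n. f n \<le> real n * (ln (real n) + 1)"
  shows "preceq f (\<lambda>n. real n * ln (real n))"
  unfolding preceq_def
proof (intro exI[of _ 3] conjI allI)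
  fix n
  have "real n * (ln (real n) + 1) \<le> real n * (ln 3 + ln (real n))"
    using one_le_ln_3 by (intro mult_left_mono) auto
  also have "\<dots> \<le> 9 * (real n * (ln 3 + ln (real n)))"
    using one_le_ln_3 ln_of_nat_nonneg[of n] by simp
  also have "\<dots> = real 3 * (real (3 * n) * ln (real (3 * n)))"
    by (cases "n = 0") (simp_all add: ln_mult)
  finally show "f n \<le> real 3 * (real (3 * n) * ln (real (3 * n)))"
    using assms[of n] by linarith
qed simp

lemma preceq_n_ln_if_ge:
  assumes lower: "\<And>n. real n * ln (real n) / 4 - 7 * real n / 4 \<le> f n"
    and nonneg: "\<And>n. 0 \<le> f n"
  shows "preceq (\<lambda>n. real n * (ln (real n) + 1)) f"
  unfolding preceq_def
proof (intro exI[of _ "3 ^ 8"] conjI allI)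
  \<comment> \<open>\<open>ln C \<ge> 8\<close> absorbs the \<open>-7n/4\<close>, and \<open>C \<ge> 4\<close> the factor \<open>1/4\<close>\<close>
  define C :: nat where "C = 3 ^ 8"
  have "8 \<le> ln (real C)" using one_le_ln_3 ln_realpow[of 3 8] by (simp add: C_def)
  fix n
  show "real n * (ln (real n) + 1) \<le> real (3 ^ 8) * f (3 ^ 8 * n)"
  proof (cases "n = 0")
    case False
    have "real n * (ln (real n) + 1) \<le> real n * (ln (real C) - 7 + ln (real n))"
      using \<open>8 \<le> ln (real C)\<close> by (intro mult_left_mono) auto
    also have "\<dots> \<le> real C / 4 * (real n * (ln (real C) - 7 + ln (real n)))"
      using \<open>8 \<le> ln (real C)\<close> ln_of_nat_nonneg[of n] by (simp add: C_def)
    also have "\<dots> = real (C * n) * ln (real (C * n)) / 4 - 7 * real (C * n) / 4"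
      using False by (simp add: C_def ln_mult algebra_simps)
    also have "\<dots> \<le> f (C * n)" by (rule lower)
    also have "\<dots> \<le> real C * f (C * n)"
      using nonneg[of "C * n"] by (simp add: C_def)
    finally show ?thesis unfolding C_def .
  qed (simp add: nonneg)
qed simp

theorem proposition3:
  fixes \<Gamma> :: "real set"
  assumes "add_subgroup \<Gamma>"
    and "commensurable \<Gamma> \<int>"
  shows "simeq (\<lambda>n. ln (real (Cn \<Gamma> n))) (\<lambda>n. ln (real n)) \<and>
    preceq (\<lambda>n. real n * (ln (real n) powr ln 2)) (\<lambda>n. real (Cn \<Gamma> n)) \<and>
    preceq (\<lambda>n. real (Cn \<Gamma> n)) (\<lambda>n. real n * ln (real n))"
proof -
  have "commensurable (int_multiples 1) \<Gamma>"
    using assms(2) unfolding Ints_eq_int_multiples_1 commensurable_def by blast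
  then obtain a b :: nat where "a > 0" "b > 0" "\<Gamma> = int_multiples (of_nat a / of_nat b)"
    using commensurable_int_multiplesE[OF zero_less_one assms(1)] by (metis mult_1)
  then have Cn: "Cn \<Gamma> = (\<lambda>n. card (coprime_prod_le_pairs n))"
    using Cn_int_multiples by auto
  have powr_le: "real n * (ln (real n) powr ln 2) \<le> real n * (ln (real n) + 1)" for n
    using powr_le_add_one[of "ln (real n)" "ln 2"] ln_of_nat_nonneg[of n] ln_2_less_1
    by (intro mult_left_mono) auto
  show ?thesis
    unfolding Cn simeq_def
    using preceq_ln_ln_if_le_square[OF card_coprime_prod_le_pairs_le_square]
      preceq_ln_ln_if_ge[OF card_coprime_prod_le_pairs_ge]
      preceq_mono_left[OF powr_le
        preceq_n_ln_if_ge[OF card_coprime_prod_le_pairs_lower of_nat_0_le_iff]]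
      preceq_n_ln_if_le[OF card_coprime_prod_le_pairs_upper]
    by blast
qed

end
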